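(* Let $k\geq 1$ and let $T$ be a $2k$-strong tournament such that for every two distinct vertices $x,y$ of $T$ there is a path of length 2 between $x$ and $y$ (i.e. a vertex $z$ with $x\to z\to y$ or $y\to z\to x$). Then $T$ is $(k+2)^{*}$-weakly connected.
   Context: A tournament is a digraph in which each pair of distinct vertices is joined by exactly one arc; $a\to b$ means $a$ dominates $b$ (i.e. $ab$ is an arc). A digraph is $m$-strong if it has more than $m$ vertices and remains strongly connected after deleting any set of fewer than $m$ vertices. For distinct vertices $u,v$ of a digraph $D$, a weak $k^{*}$-container between $u$ and $v$ is a set of $k$ internally disjoint paths, each of which is either a $(u,v)$-path or a $(v,u)$-path (different paths may have different directions), whose union contains every vertex of $D$. $D$ is $k^{*}$-weakly connected if there is a weak $k^{*}$-container between every two distinct vertices of $D$. *)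

theory Defs
  imports Main
begin

text \<open>A digraph is given by a vertex set V and an arc relation A (A a b means a dominates b).\<close>

definition tournament :: "'a set \<Rightarrow> ('a \<Rightarrow> 'a \<Rightarrow> bool) \<Rightarrow> bool" where
  "tournament V A \<longleftrightarrow> finite V \<and> (\<forall>x y. A x y \<longrightarrow> x \<in> V \<and> y \<in> V)
     \<and> (\<forall>x\<in>V. \<not> A x x)
     \<and> (\<forall>x\<in>V. \<forall>y\<in>V. x \<noteq> y \<longrightarrow> (A x y \<longleftrightarrow> \<not> A y x))"

definition strongly_connected :: "'a set \<Rightarrow> ('a \<Rightarrow> 'a \<Rightarrow> bool) \<Rightarrow> bool" where
  "strongly_connected W A \<longleftrightarrow>
     (\<forall>x\<in>W. \<forall>y\<in>W. (\<lambda>a b. A a b \<and> a \<in> W \<and> b \<in> W)\<^sup>*\<^sup>* x y)"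

definition m_strong :: "nat \<Rightarrow> 'a set \<Rightarrow> ('a \<Rightarrow> 'a \<Rightarrow> bool) \<Rightarrow> bool" where
  "m_strong m V A \<longleftrightarrow> card V > m \<and>
     (\<forall>S. S \<subseteq> V \<and> card S < m \<longrightarrow> strongly_connected (V - S) A)"

definition is_path :: "'a set \<Rightarrow> ('a \<Rightarrow> 'a \<Rightarrow> bool) \<Rightarrow> 'a list \<Rightarrow> 'a \<Rightarrow> 'a \<Rightarrow> bool" where
  "is_path V A p u v \<longleftrightarrow> p \<noteq> [] \<and> distinct p \<and> hd p = u \<and> last p = v \<and> set p \<subseteq> V
     \<and> (\<forall>i. Suc i < length p \<longrightarrow> A (p ! i) (p ! Suc i))"

definition weak_container :: "'a set \<Rightarrow> ('a \<Rightarrow> 'a \<Rightarrow> bool) \<Rightarrow> nat \<Rightarrow> 'a \<Rightarrow> 'a \<Rightarrow> bool" where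
  "weak_container V A k u v \<longleftrightarrow> (\<exists>Ps :: 'a list list.
     length Ps = k \<and> distinct Ps
     \<and> (\<forall>p\<in>set Ps. is_path V A p u v \<or> is_path V A p v u)
     \<and> (\<forall>i<k. \<forall>j<k. i \<noteq> j \<longrightarrow> (set (Ps ! i) - {u, v}) \<inter> (set (Ps ! j) - {u, v}) = {})
     \<and> (\<Union>p\<in>set Ps. set p) = V)"

definition k_star_weakly_connected :: "nat \<Rightarrow> 'a set \<Rightarrow> ('a \<Rightarrow> 'a \<Rightarrow> bool) \<Rightarrow> bool" where
  "k_star_weakly_connected k V A \<longleftrightarrow>
     (\<forall>u\<in>V. \<forall>v\<in>V. u \<noteq> v \<longrightarrow> weak_container V A k u v)"

end

theory Submission
  imports Defs
begin

text \<open>Fix an arc u \<rightarrow> v. Every midpoint z, i.e.\ u \<rightarrow> z \<rightarrow> v or v \<rightarrow> z \<rightarrow> u, gives a path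
  of length two, and every detour x, y with u \<rightarrow> x \<rightarrow> y \<rightarrow> v a path of length three. By hypothesis
  there is at least one midpoint; take m = min(#midpoints, k) of them together with k - m disjoint
  detours. These paths use 2k - m < 2k inner vertices, so deleting them leaves a strong tournament;
  the same bound lets the detours be found greedily, each one by a crossing argument on a walk from
  v back to u. Camion's theorem then gives a Hamiltonian cycle of the rest through u and v, which
  splits into the last two paths of the container.\<close>

lemma successively_iff_consecutive:
  "successively R xs \<longleftrightarrow> (\<forall>ys a b zs. xs = ys @ a # b # zs \<longrightarrow> R a b)"
proof (intro iffI allI impI)
  fix ys a b zs
  assume "successively R xs" "xs = ys @ a # b # zs"
  then show "R a b" by (simp add: successively_append_iff)
next
  assume consecutive: "\<forall>ys a b zs. xs = ys @ a # b # zs \<longrightarrow> R a b"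
  have "R (xs ! i) (xs ! Suc i)" if "Suc i < length xs" for i
  proof -
    have "xs = take i xs @ xs ! i # xs ! Suc i # drop (Suc (Suc i)) xs"
      using that by (simp add: Cons_nth_drop_Suc)
    then show ?thesis using consecutive by blast
  qed
  then show "successively R xs" unfolding successively_conv_nth by blast
qed

lemma successively_imp_from_hd:
  assumes "successively (\<lambda>a b. P a \<longrightarrow> P b) xs" "P (hd xs)" "z \<in> set xs"
  shows "P z"
  using assms by (induction "\<lambda>a b. P a \<longrightarrow> P b" xs rule: successively.induct) auto

lemma successively_imp_to_last:
  assumes "successively (\<lambda>a b. P a \<longrightarrow> P b) xs" "z \<in> set xs" "P z"
  shows "P (last xs)"
proof (rule ccontr)
  assume "\<not> P (last xs)"
  moreover have "successively (\<lambda>a b. \<not> P a \<longrightarrow> \<not> P b) (rev xs)"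
    using assms(1) by (auto elim: successively_mono)
  moreover have "xs \<noteq> []" using assms(2) by auto
  ultimately show False
    using successively_imp_from_hd[of "\<lambda>a. \<not> P a" "rev xs" z] assms(2,3) by (simp add: hd_rev)
qed

lemma rtranclp_crossing:
  assumes "R\<^sup>*\<^sup>* x y" "P x" "\<not> P y"
  shows "\<exists>a b. R a b \<and> P a \<and> \<not> P b"
  using assms by (induction rule: rtranclp_induct) auto

lemma is_path_iff:
  "is_path V A p u v \<longleftrightarrow>
     p \<noteq> [] \<and> distinct p \<and> hd p = u \<and> last p = v \<and> set p \<subseteq> V \<and> successively A p"
  unfolding is_path_def successively_conv_nth ..

lemma is_path_mono: "is_path V A p u v \<Longrightarrow> set p \<subseteq> W \<Longrightarrow> is_path W A p u v"
  unfolding is_path_iff by blast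

lemma is_path_ends: "is_path V A p u v \<Longrightarrow> u \<in> set p \<and> v \<in> set p"
  unfolding is_path_iff by (metis hd_in_set last_in_set)

lemma is_path_of_rtranclp:
  assumes "(\<lambda>a b. A a b \<and> a \<in> U \<and> b \<in> U)\<^sup>*\<^sup>* x y" "x \<in> U"
  obtains p where "is_path U A p x y"
  using assms
proof (induction arbitrary: thesis rule: rtranclp_induct)
  case base
  show ?case by (rule base(1)[of "[x]"]) (use base in \<open>simp add: is_path_iff\<close>)
next
  case (step y z)
  obtain p where p: "is_path U A p x y" using step by blast
  show ?case
  proof (cases "z \<in> set p")
    case True
    then obtain xs ys where "p = xs @ z # ys" by (meson split_list)
    then have "is_path U A (xs @ [z]) x z"
      using p by (auto simp: is_path_iff successively_append_iff hd_append split: if_splits)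
    then show ?thesis by (rule step.prems)
  next
    case False
    then have "is_path U A (p @ [z]) x z"
      using p step(2) by (auto simp: is_path_iff successively_append_iff hd_append)
    then show ?thesis by (rule step.prems)
  qed
qed

lemma is_path_length_le_two:
  assumes "is_path V A p u v" "length p \<le> 2" "u \<noteq> v"
  shows "p = [u, v]"
  using assms unfolding is_path_iff by (cases p; cases "tl p") auto

section \<open>Camion's theorem\<close>

lemma tournament_irrefl: "tournament V A \<Longrightarrow> \<not> A x x"
  unfolding tournament_def by blast

lemma tournament_asym: "tournament V A \<Longrightarrow> A x y \<Longrightarrow> \<not> A y x"
  unfolding tournament_def by metis

lemma tournament_total:
  "tournament V A \<Longrightarrow> x \<in> V \<Longrightarrow> y \<in> V \<Longrightarrow> x \<noteq> y \<Longrightarrow> A x y \<or> A y x"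
  unfolding tournament_def by blast

lemma tournament_finite: "tournament V A \<Longrightarrow> finite V"
  unfolding tournament_def by blast

lemma tournament_arc_vertices: "tournament V A \<Longrightarrow> A x y \<Longrightarrow> x \<in> V \<and> y \<in> V"
  unfolding tournament_def by blast

definition insertable :: "('a \<Rightarrow> 'a \<Rightarrow> bool) \<Rightarrow> 'a \<Rightarrow> 'a list \<Rightarrow> bool" where
  "insertable A x p \<longleftrightarrow> (\<exists>ys a b zs. p = ys @ a # b # zs \<and> A a x \<and> A x b)"

definition cycle_through ::
    "'a set \<Rightarrow> ('a \<Rightarrow> 'a \<Rightarrow> bool) \<Rightarrow> 'a \<Rightarrow> 'a \<Rightarrow> 'a list \<Rightarrow> 'a list \<Rightarrow> bool" where
  "cycle_through U A u v p q \<longleftrightarrow>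
     is_path U A p u v \<and> is_path U A q v u \<and> set p \<inter> set q = {u, v}"

lemma cycle_through_swap: "cycle_through U A u v p q \<Longrightarrow> cycle_through U A v u q p"
  unfolding cycle_through_def by blast

lemma cycle_through_subset: "cycle_through U A u v p q \<Longrightarrow> set p \<union> set q \<subseteq> U"
  unfolding cycle_through_def is_path_iff by blast

lemma not_insertable_successively:
  assumes "tournament V A" "x \<in> V" "set p \<subseteq> V" "x \<notin> set p" "\<not> insertable A x p"
  shows "successively (\<lambda>a b. A a x \<longrightarrow> A b x) p"
  unfolding successively_iff_consecutive
proof (intro allI impI)
  fix ys a b zs
  assume p: "p = ys @ a # b # zs" and "A a x"
  then have "\<not> A x b" using assms(5) unfolding insertable_def by blast
  moreover have "b \<in> V" "b \<noteq> x" using p assms(3,4) by auto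
  ultimately show "A b x" using tournament_total[OF assms(1,2)] by blast
qed

lemma cycle_through_insert:
  assumes "cycle_through U A u v p q" "x \<in> U" "x \<notin> set p \<union> set q" "insertable A x p"
  shows "\<exists>p'. cycle_through U A u v p' q \<and> card (set p \<union> set q) < card (set p' \<union> set q)"
proof -
  obtain ys a b zs where p: "p = ys @ a # b # zs" "A a x" "A x b"
    using assms(4) unfolding insertable_def by blast
  let ?p' = "ys @ a # x # b # zs"
  have "cycle_through U A u v ?p' q"
    using assms(1-3) p unfolding cycle_through_def is_path_iff
    by (auto simp: successively_append_iff hd_append)
  moreover have "set ?p' \<union> set q = insert x (set p \<union> set q)" using p by auto
  ultimately show ?thesis using assms(3) by (intro exI[of _ ?p']) simp
qed

text \<open>A vertex that fits into neither side of the cycle is dominated by all of it or dominates all of it: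
  the arc between it and the cycle cannot change direction along the cycle.\<close>

lemma cycle_through_dominance_dichotomy:
  assumes T: "tournament V A" and "U \<subseteq> V" and C: "cycle_through U A u v p q"
    and x: "x \<in> U" "x \<notin> set p \<union> set q"
    and "\<not> insertable A x p" "\<not> insertable A x q"
  shows "(\<forall>c\<in>set p \<union> set q. A c x) \<or> (\<forall>c\<in>set p \<union> set q. A x c)"
proof -
  have pq: "is_path U A p u v" "is_path U A q v u" using C unfolding cycle_through_def by auto
  have sp: "successively (\<lambda>a b. A a x \<longrightarrow> A b x) p"
    using not_insertable_successively[OF T, of x p] assms(2,6) x pq(1) unfolding is_path_iff by auto
  have sq: "successively (\<lambda>a b. A a x \<longrightarrow> A b x) q"
    using not_insertable_successively[OF T, of x q] assms(2,7) x pq(2) unfolding is_path_iff by auto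
  have ends: "hd p = u" "last p = v" "hd q = v" "last q = u" using pq unfolding is_path_iff by auto
  have "(\<forall>c\<in>set p \<union> set q. A c x) \<or> (\<forall>c\<in>set p \<union> set q. \<not> A c x)"
  proof (cases "A u x")
    case True
    then have "\<forall>c\<in>set p. A c x" using successively_imp_from_hd[OF sp] ends by auto
    then have "A v x" using is_path_ends[OF pq(1)] by blast
    then have "\<forall>c\<in>set q. A c x" using successively_imp_from_hd[OF sq] ends by auto
    then show ?thesis using \<open>\<forall>c\<in>set p. A c x\<close> by blast
  next
    case False
    then have "\<forall>c\<in>set q. \<not> A c x" using successively_imp_to_last[OF sq] ends by auto
    then have "\<not> A v x" using is_path_ends[OF pq(2)] by blast
    then have "\<forall>c\<in>set p. \<not> A c x" using successively_imp_to_last[OF sp] ends by auto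
    then show ?thesis using \<open>\<forall>c\<in>set q. \<not> A c x\<close> by blast
  qed
  moreover have "A c x \<or> A x c" if "c \<in> set p \<union> set q" for c
    using that x cycle_through_subset[OF C] assms(2) tournament_total[OF T] by blast
  ultimately show ?thesis by blast
qed

text \<open>Leave the set C along some arc into a vertex z dominated by C, then return from z to C: the return
  walk must leave the vertices dominated by C along an arc b \<rightarrow> a, and the dichotomy forces a to dominate C.\<close>

lemma strong_tournament_absorbing_arc:
  assumes T: "tournament V A" and "U \<subseteq> V" and S: "strongly_connected U A"
    and "C \<subseteq> U" "c\<^sub>0 \<in> C" "C \<noteq> U"
    and dichotomy: "\<forall>x\<in>U - C. (\<forall>c\<in>C. A c x) \<or> (\<forall>c\<in>C. A x c)"
  shows "\<exists>b a. b \<in> U - C \<and> a \<in> U - C \<and> A b a \<and> (\<forall>c\<in>C. A c b) \<and> (\<forall>c\<in>C. A a c)"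
proof -
  let ?R = "\<lambda>a b. A a b \<and> a \<in> U \<and> b \<in> U"
  obtain y where y: "y \<in> U - C" using assms(4,6) by blast
  have "?R\<^sup>*\<^sup>* c\<^sub>0 y" using S y assms(4,5) unfolding strongly_connected_def by blast
  then obtain c z where cz: "?R c z" "c \<in> C" "z \<notin> C"
    using rtranclp_crossing[of ?R c\<^sub>0 y "\<lambda>w. w \<in> C"] assms(5) y by blast
  have z_dominated: "\<forall>c\<in>C. A c z"
    using dichotomy cz tournament_asym[OF T] by blast
  have "?R\<^sup>*\<^sup>* z c\<^sub>0" using S cz assms(4,5) unfolding strongly_connected_def by blast
  then obtain b a where ba: "?R b a" "\<forall>c\<in>C. A c b" "\<not> (\<forall>c\<in>C. A c a)"
    using rtranclp_crossing[of ?R z c\<^sub>0 "\<lambda>w. \<forall>c\<in>C. A c w"] z_dominated assms(5)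
      tournament_irrefl[OF T] by blast
  have "b \<notin> C" "a \<notin> C" using ba tournament_irrefl[OF T] tournament_asym[OF T] by blast+
  moreover have "\<forall>c\<in>C. A a c" using dichotomy ba \<open>a \<notin> C\<close> by blast
  ultimately show ?thesis using ba by blast
qed

lemma cycle_through_long_side:
  assumes "tournament V A" "cycle_through U A u v p q" "u \<noteq> v"
  shows "3 \<le> length p \<or> 3 \<le> length q"
proof (rule ccontr)
  assume "\<not> ?thesis"
  then have "p = [u, v]" "q = [v, u]"
    using is_path_length_le_two[of U A p u v] is_path_length_le_two[of U A q v u] assms(2,3)
    unfolding cycle_through_def by auto
  then show False
    using assms(1,2) tournament_asym unfolding cycle_through_def is_path_iff by fastforce
qed

lemma cycle_through_replace:
  assumes C: "cycle_through U A u v p q" and "3 \<le> length p"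
    and ab: "a \<in> U - (set p \<union> set q)" "b \<in> U - (set p \<union> set q)" "a \<noteq> b" "A b a"
    and "\<forall>c\<in>set p \<union> set q. A c b" "\<forall>c\<in>set p \<union> set q. A a c"
  shows "\<exists>p'. cycle_through U A u v p' q \<and> card (set p \<union> set q) < card (set p' \<union> set q)"
proof -
  obtain w\<^sub>1 w w\<^sub>3 r where p: "p = w\<^sub>1 # w # w\<^sub>3 # r"
    using assms(2) by (auto simp: numeral_3_eq_3 Suc_le_length_iff)
  let ?p' = "w\<^sub>1 # b # a # w\<^sub>3 # r"
  have "distinct p" "hd p = u" "last p = v" "set p \<inter> set q = {u, v}"
    using C unfolding cycle_through_def is_path_iff by auto
  then have "w \<noteq> u" "w \<noteq> v" "w \<notin> set q"
    using p last_in_set[of "w\<^sub>3 # r"] by auto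
  then have "set ?p' \<union> set q = insert b (insert a ((set p \<union> set q) - {w}))"
    using p \<open>distinct p\<close> by auto
  moreover have "w \<in> set p \<union> set q" using p by simp
  moreover from this have "card (set p \<union> set q) > 0" by (auto simp: card_gt_0_iff)
  ultimately have "card (set ?p' \<union> set q) = card (set p \<union> set q) + 1"
    using ab(1-3) by (simp add: card_Diff_singleton)
  moreover have "cycle_through U A u v ?p' q"
    using C p ab assms(7,8) unfolding cycle_through_def is_path_iff by auto
  ultimately show ?thesis by (intro exI[of _ ?p']) simp
qed

lemma cycle_through_grow_swap:
  assumes "cycle_through U A v u q' p" "card (set q \<union> set p) < card (set q' \<union> set p)"
  shows "\<exists>p' q'. cycle_through U A u v p' q' \<and> card (set p \<union> set q) < card (set p' \<union> set q')"
  using assms cycle_through_swap[OF assms(1)] by (intro exI[of _ p] exI[of _ q']) (simp add: Un_commute)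

lemma cycle_through_grow_by_replacement:
  assumes T: "tournament V A" and UV: "U \<subseteq> V" and S: "strongly_connected U A"
    and C: "cycle_through U A u v p q" and "u \<noteq> v" and "set p \<union> set q \<noteq> U"
    and "\<forall>x\<in>U - (set p \<union> set q). \<not> insertable A x p \<and> \<not> insertable A x q"
  shows "\<exists>p' q'. cycle_through U A u v p' q' \<and> card (set p \<union> set q) < card (set p' \<union> set q')"
proof -
  let ?C = "set p \<union> set q"
  have dichotomy: "\<forall>x\<in>U - ?C. (\<forall>c\<in>?C. A c x) \<or> (\<forall>c\<in>?C. A x c)"
    using assms(7) cycle_through_dominance_dichotomy[OF T UV C] by blast
  have "u \<in> ?C" using C unfolding cycle_through_def by blast
  from strong_tournament_absorbing_arc[OF T UV S cycle_through_subset[OF C] this assms(6) dichotomy]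
  obtain b a where ba: "b \<in> U - ?C" "a \<in> U - ?C" "A b a" "\<forall>c\<in>?C. A c b" "\<forall>c\<in>?C. A a c"
    by blast
  have "a \<noteq> b" using ba(3) tournament_irrefl[OF T] by blast
  from cycle_through_long_side[OF T C \<open>u \<noteq> v\<close>] show ?thesis
  proof
    assume "3 \<le> length p"
    from cycle_through_replace[OF C this ba(2,1) \<open>a \<noteq> b\<close> ba(3-5)] show ?thesis by blast
  next
    assume "3 \<le> length q"
    note ba' = ba[unfolded Un_commute[of "set p"]]
    from cycle_through_replace[OF cycle_through_swap[OF C] \<open>3 \<le> length q\<close> ba'(2,1) \<open>a \<noteq> b\<close> ba'(3-5)]
    obtain q' where "cycle_through U A v u q' p" "card (set q \<union> set p) < card (set q' \<union> set p)"
      by blast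
    then show ?thesis by (rule cycle_through_grow_swap)
  qed
qed

lemma cycle_through_grow:
  assumes T: "tournament V A" and UV: "U \<subseteq> V" and S: "strongly_connected U A"
    and C: "cycle_through U A u v p q" and "u \<noteq> v" and "set p \<union> set q \<noteq> U"
  shows "\<exists>p' q'. cycle_through U A u v p' q' \<and> card (set p \<union> set q) < card (set p' \<union> set q')"
proof (cases "\<exists>x\<in>U - (set p \<union> set q). insertable A x p \<or> insertable A x q")
  case True
  then obtain x where x: "x \<in> U" "x \<notin> set p \<union> set q" "insertable A x p \<or> insertable A x q"
    by blast
  from x(3) show ?thesis
  proof
    assume "insertable A x p"
    then show ?thesis using cycle_through_insert[OF C x(1,2)] by blast
  next
    assume "insertable A x q"
    moreover have "x \<notin> set q \<union> set p" using x(2) by blast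
    ultimately obtain q' where "cycle_through U A v u q' p" "card (set q \<union> set p) < card (set q' \<union> set p)"
      using cycle_through_insert[OF cycle_through_swap[OF C] x(1)] by blast
    then show ?thesis by (rule cycle_through_grow_swap)
  qed
next
  case False
  then show ?thesis using cycle_through_grow_by_replacement[OF assms] by blast
qed

lemma cycle_through_arc:
  assumes "strongly_connected U A" "u \<in> U" "v \<in> U" "u \<noteq> v" "A u v"
  shows "\<exists>q. cycle_through U A u v [u, v] q"
proof -
  have "(\<lambda>a b. A a b \<and> a \<in> U \<and> b \<in> U)\<^sup>*\<^sup>* v u"
    using assms(1-3) unfolding strongly_connected_def by blast
  from is_path_of_rtranclp[OF this assms(3)] obtain q where q: "is_path U A q v u" .
  then have "set [u, v] \<inter> set q = {u, v}" using is_path_ends by fastforce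
  then have "cycle_through U A u v [u, v] q"
    using assms(2-5) q unfolding cycle_through_def is_path_iff by simp
  then show ?thesis ..
qed

theorem strong_subtournament_spanning_cycle:
  assumes T: "tournament V A" and UV: "U \<subseteq> V" and S: "strongly_connected U A"
    and "u \<in> U" "v \<in> U" "u \<noteq> v"
  obtains p q where "cycle_through U A u v p q" "set p \<union> set q = U"
proof -
  let ?P = "\<lambda>(p, q). cycle_through U A u v p q"
  let ?size = "\<lambda>(p, q). card (set p \<union> set q)"
  have "A u v \<or> A v u" using tournament_total[OF T] assms(4-6) UV by blast
  then have "\<exists>p q. cycle_through U A u v p q"
  proof
    assume "A u v"
    then show ?thesis using cycle_through_arc[OF S assms(4-6)] by blast
  next
    assume "A v u"
    then obtain q where "cycle_through U A v u [v, u] q"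
      using cycle_through_arc[OF S assms(5,4)] assms(6) by blast
    then show ?thesis by (blast dest: cycle_through_swap)
  qed
  then obtain p\<^sub>0 q\<^sub>0 where "?P (p\<^sub>0, q\<^sub>0)" by auto
  moreover have "\<forall>pq. ?P pq \<longrightarrow> ?size pq < Suc (card U)"
  proof (intro allI impI)
    fix pq assume "?P pq"
    moreover obtain p q where "pq = (p, q)" by fastforce
    moreover have "finite U" using tournament_finite[OF T] UV finite_subset by blast
    ultimately show "?size pq < Suc (card U)"
      using cycle_through_subset[of U A u v p q] by (simp add: card_mono less_Suc_eq_le)
  qed
  ultimately obtain p q where max: "?P (p, q)" "\<forall>pq'. ?P pq' \<longrightarrow> ?size pq' \<le> ?size (p, q)"
    using ex_has_greatest_nat[of ?P "(p\<^sub>0, q\<^sub>0)" ?size "Suc (card U)"] by (metis surj_pair)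
  have "set p \<union> set q = U"
  proof (rule ccontr)
    assume "set p \<union> set q \<noteq> U"
    then obtain p' q' where "?P (p', q')" "?size (p, q) < ?size (p', q')"
      using cycle_through_grow[OF T UV S _ \<open>u \<noteq> v\<close>, of p q] max(1) by auto
    then show False using max(2) by fastforce
  qed
  then show ?thesis using that max(1) by simp
qed

section \<open>Weak containers\<close>

lemma nth_disjoint_iff_pairwise:
  assumes "distinct xs"
  shows "(\<forall>i<length xs. \<forall>j<length xs. i \<noteq> j \<longrightarrow> F (xs ! i) \<inter> F (xs ! j) = {}) \<longleftrightarrow>
    pairwise (\<lambda>x y. F x \<inter> F y = {}) (set xs)"
proof
  assume nth: "\<forall>i<length xs. \<forall>j<length xs. i \<noteq> j \<longrightarrow> F (xs ! i) \<inter> F (xs ! j) = {}"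
  show "pairwise (\<lambda>x y. F x \<inter> F y = {}) (set xs)"
  proof
    fix x y assume "x \<in> set xs" "y \<in> set xs" "x \<noteq> y"
    then obtain i j where "i < length xs" "j < length xs" "x = xs ! i" "y = xs ! j"
      by (metis in_set_conv_nth)
    then show "F x \<inter> F y = {}" using nth \<open>x \<noteq> y\<close> by blast
  qed
next
  assume "pairwise (\<lambda>x y. F x \<inter> F y = {}) (set xs)"
  then show "\<forall>i<length xs. \<forall>j<length xs. i \<noteq> j \<longrightarrow> F (xs ! i) \<inter> F (xs ! j) = {}"
    using assms by (simp add: pairwise_def nth_eq_iff_index_eq)
qed

lemma weak_container_iff_pairwise:
  "weak_container V A k u v \<longleftrightarrow> (\<exists>Ps. length Ps = k \<and> distinct Ps
     \<and> (\<forall>p\<in>set Ps. is_path V A p u v \<or> is_path V A p v u)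
     \<and> pairwise (\<lambda>p q. (set p - {u, v}) \<inter> (set q - {u, v}) = {}) (set Ps)
     \<and> (\<Union>p\<in>set Ps. set p) = V)"
  unfolding weak_container_def
proof (rule arg_cong[where f = Ex], rule ext, intro conj_cong refl)
  fix Ps :: "'a list list"
  assume "length Ps = k" "distinct Ps"
  then show "(\<forall>i<k. \<forall>j<k. i \<noteq> j \<longrightarrow> (set (Ps ! i) - {u, v}) \<inter> (set (Ps ! j) - {u, v}) = {}) \<longleftrightarrow>
    pairwise (\<lambda>p q. (set p - {u, v}) \<inter> (set q - {u, v}) = {}) (set Ps)"
    using nth_disjoint_iff_pairwise[of Ps "\<lambda>p. set p - {u, v}"] by simp
qed

lemma weak_container_swap: "weak_container V A k u v \<Longrightarrow> weak_container V A k v u"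
  unfolding weak_container_def by (simp add: insert_commute disj_commute)

lemma weak_container_cycle_through:
  assumes "cycle_through W A u v p q" "u \<noteq> v"
  shows "weak_container (set p \<union> set q) A 2 u v"
  unfolding weak_container_iff_pairwise
proof (intro exI[of _ "[p, q]"] conjI)
  have pq: "is_path W A p u v" "is_path W A q v u" "set p \<inter> set q = {u, v}"
    using assms(1) unfolding cycle_through_def by blast+
  then have "hd p \<noteq> hd q" using assms(2) unfolding is_path_iff by simp
  then show "distinct [p, q]" by auto
  show "\<forall>r\<in>set [p, q]. is_path (set p \<union> set q) A r u v \<or> is_path (set p \<union> set q) A r v u"
    using is_path_mono[OF pq(1)] is_path_mono[OF pq(2)] by simp
  show "pairwise (\<lambda>p q. (set p - {u, v}) \<inter> (set q - {u, v}) = {}) (set [p, q])"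
    using pq(3) by (auto simp: pairwise_insert)
qed simp_all

lemma weak_container_add_path:
  assumes W: "weak_container W A j u v" and r: "is_path V A r u v \<or> is_path V A r v u"
    and "set r - {u, v} \<noteq> {}" "(set r - {u, v}) \<inter> W = {}"
  shows "weak_container (W \<union> set r) A (Suc j) u v"
proof -
  obtain Ps where Ps: "length Ps = j" "distinct Ps" "\<forall>p\<in>set Ps. is_path W A p u v \<or> is_path W A p v u"
    "pairwise (\<lambda>p q. (set p - {u, v}) \<inter> (set q - {u, v}) = {}) (set Ps)" "(\<Union>p\<in>set Ps. set p) = W"
    using W unfolding weak_container_iff_pairwise by blast
  show ?thesis unfolding weak_container_iff_pairwise
  proof (intro exI[of _ "r # Ps"] conjI)
    show "length (r # Ps) = Suc j" using Ps(1) by simp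
    have "r \<notin> set Ps" using Ps(5) assms(3,4) by blast
    then show "distinct (r # Ps)" using Ps(2) by simp
    show "\<forall>p\<in>set (r # Ps). is_path (W \<union> set r) A p u v \<or> is_path (W \<union> set r) A p v u"
    proof
      fix p assume p: "p \<in> set (r # Ps)"
      show "is_path (W \<union> set r) A p u v \<or> is_path (W \<union> set r) A p v u"
      proof (cases "p = r")
        case True
        then show ?thesis using r is_path_mono[of V A r _ _ "W \<union> set r"] by blast
      next
        case False
        then have "p \<in> set Ps" "set p \<subseteq> W \<union> set r" using p Ps(5) by auto
        then show ?thesis using Ps(3) is_path_mono[of W A p _ _ "W \<union> set r"] by blast
      qed
    qed
    have "(set p - {u, v}) \<inter> (set r - {u, v}) = {}" if "p \<in> set Ps" for p
      using that Ps(5) assms(4) by blast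
    then show "pairwise (\<lambda>p q. (set p - {u, v}) \<inter> (set q - {u, v}) = {}) (set (r # Ps))"
      using Ps(4) by (simp add: pairwise_insert Int_commute)
    show "(\<Union>p\<in>set (r # Ps). set p) = W \<union> set r" using Ps(5) by auto
  qed
qed

section \<open>Midpoints and detours\<close>

definition midpoints :: "'a set \<Rightarrow> ('a \<Rightarrow> 'a \<Rightarrow> bool) \<Rightarrow> 'a \<Rightarrow> 'a \<Rightarrow> 'a set" where
  "midpoints V A u v = {z \<in> V. (A u z \<and> A z v) \<or> (A v z \<and> A z u)}"

lemma midpoint_path:
  assumes T: "tournament V A" and "z \<in> midpoints V A u v"
  shows "is_path V A [u, z, v] u v \<or> is_path V A [v, z, u] v u" "z \<noteq> u" "z \<noteq> v"
proof -
  have z: "(A u z \<and> A z v) \<or> (A v z \<and> A z u)" using assms(2) unfolding midpoints_def by blast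
  then show "z \<noteq> u" "z \<noteq> v" using tournament_irrefl[OF T] by blast+
  have "u \<noteq> v" using z tournament_asym[OF T] by blast
  with z \<open>z \<noteq> u\<close> \<open>z \<noteq> v\<close> show "is_path V A [u, z, v] u v \<or> is_path V A [v, z, u] v u"
    using tournament_arc_vertices[OF T] unfolding is_path_iff by auto
qed

lemma detour_path:
  assumes T: "tournament V A" and "u \<noteq> v" "A u x" "A x y" "A y v"
  shows "is_path V A [u, x, y, v] u v"
proof -
  have "distinct [u, x, y, v]"
    using assms(2-5) tournament_irrefl[OF T] tournament_asym[OF T] by auto
  then show ?thesis using assms(3-5) tournament_arc_vertices[OF T] unfolding is_path_iff by auto
qed

lemma weak_container_add_midpoints:
  assumes T: "tournament V A" and "weak_container W A j u v" "u \<in> W" "v \<in> W"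
    and "distinct zs" "set zs \<subseteq> midpoints V A u v" "set zs \<inter> W = {}"
  shows "weak_container (W \<union> set zs) A (j + length zs) u v"
  using assms(5-7)
proof (induction zs)
  case (Cons z zs)
  then have IH: "weak_container (W \<union> set zs) A (j + length zs) u v" by simp
  have z: "z \<in> midpoints V A u v" "z \<notin> W \<union> set zs" using Cons.prems by auto
  obtain r where r: "is_path V A r u v \<or> is_path V A r v u" "set r = {u, z, v}"
  proof (cases "is_path V A [u, z, v] u v")
    case True
    then show ?thesis using that[of "[u, z, v]"] by simp
  next
    case False
    then show ?thesis using that[of "[v, z, u]"] midpoint_path(1)[OF T z(1)] by auto
  qed
  have "set r - {u, v} = {z}" using r(2) midpoint_path(2,3)[OF T z(1)] by auto
  then have "weak_container (W \<union> set zs \<union> set r) A (Suc (j + length zs)) u v"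
    using weak_container_add_path[OF IH r(1)] z(2) by simp
  moreover have "W \<union> set zs \<union> set r = W \<union> set (z # zs)" using r(2) assms(3,4) by auto
  ultimately show ?case by simp
qed (use assms(2) in simp)

lemma weak_container_add_detours:
  assumes T: "tournament V A" and "weak_container W A j u v" "u \<in> W" "v \<in> W" "u \<noteq> v"
    and "distinct (map fst ds @ map snd ds)" "\<forall>(x, y)\<in>set ds. A u x \<and> A x y \<and> A y v"
    and "set (map fst ds @ map snd ds) \<inter> W = {}"
  shows "weak_container (W \<union> set (map fst ds @ map snd ds)) A (j + length ds) u v"
  using assms(6-8)
proof (induction ds)
  case (Cons d ds)
  obtain x y where d: "d = (x, y)" by fastforce
  let ?W = "W \<union> set (map fst ds @ map snd ds)"
  have IH: "weak_container ?W A (j + length ds) u v" using Cons by auto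
  have xy: "A u x" "A x y" "A y v" "x \<notin> ?W" "y \<notin> ?W" using Cons.prems d by auto
  have path: "is_path V A [u, x, y, v] u v" using detour_path[OF T \<open>u \<noteq> v\<close> xy(1-3)] .
  then have "set [u, x, y, v] - {u, v} = {x, y}" unfolding is_path_iff by auto
  then have "weak_container (?W \<union> set [u, x, y, v]) A (Suc (j + length ds)) u v"
    using weak_container_add_path[OF IH, of V "[u, x, y, v]"] path xy(4,5) by (simp only:) blast
  moreover have "?W \<union> set [u, x, y, v] = W \<union> set (map fst (d # ds) @ map snd (d # ds))"
    using d assms(3,4) by auto
  ultimately show ?case by simp
qed (use assms(2) in simp)

text \<open>Walk inside W from v to u and take the first arc x \<rightarrow> y leaving the out-neighbourhood of u:
  y dominates u and, as it is no midpoint, also v.\<close>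

lemma strong_detour_exists:
  assumes T: "tournament V A" and "W \<subseteq> V" "strongly_connected W A"
    and "u \<in> W" "v \<in> W" "A u v" "W \<inter> midpoints V A u v = {}"
  shows "\<exists>x\<in>W. \<exists>y\<in>W. A u x \<and> A x y \<and> A y v"
proof -
  let ?R = "\<lambda>a b. A a b \<and> a \<in> W \<and> b \<in> W"
  have "?R\<^sup>*\<^sup>* v u" using assms(3-5) unfolding strongly_connected_def by blast
  then obtain x y where xy: "?R x y" "A u x" "\<not> A u y"
    using rtranclp_crossing[of ?R v u "A u"] assms(6) tournament_irrefl[OF T] by blast
  have "y \<noteq> u" using xy(1,2) tournament_asym[OF T] by blast
  then have "A y u" using xy(1,3) assms(2,4) tournament_total[OF T] by blast
  moreover have "y \<noteq> v" using xy(3) assms(6) by blast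
  then have "\<not> A v y" using \<open>A y u\<close> xy(1) assms(2,7) unfolding midpoints_def by blast
  ultimately have "A y v"
    using \<open>y \<noteq> v\<close> xy(1) assms(2,5) tournament_total[OF T] by blast
  then show ?thesis using xy by blast
qed

lemma detours_avoid_ends:
  assumes T: "tournament V A" and "u \<noteq> v" "\<forall>(x, y)\<in>set ds. A u x \<and> A x y \<and> A y v"
  shows "u \<notin> set (map fst ds @ map snd ds)" "v \<notin> set (map fst ds @ map snd ds)"
proof -
  have ends: "u \<noteq> x \<and> u \<noteq> y \<and> v \<noteq> x \<and> v \<noteq> y" if "(x, y) \<in> set ds" for x y
  proof -
    from assms(3) that have "A u x" "A x y" "A y v" by auto
    from detour_path[OF T assms(2) this] have "distinct [u, x, y, v]" unfolding is_path_iff by blast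
    then show ?thesis by auto
  qed
  have "\<exists>x y. (x, y) \<in> set ds \<and> (w = x \<or> w = y)" if "w \<in> set (map fst ds @ map snd ds)" for w
    using that by force
  then show "u \<notin> set (map fst ds @ map snd ds)" "v \<notin> set (map fst ds @ map snd ds)"
    using ends by blast+
qed

lemma detours_exist:
  assumes T: "tournament V A" and S: "m_strong (2 * k) V A"
    and "u \<in> V" "v \<in> V" "A u v"
  shows "0 < t \<Longrightarrow> card (midpoints V A u v) + 2 * t \<le> 2 * k \<Longrightarrow>
    \<exists>ds. length ds = t \<and> distinct (map fst ds @ map snd ds)
      \<and> set (map fst ds @ map snd ds) \<inter> midpoints V A u v = {}
      \<and> (\<forall>(x, y)\<in>set ds. A u x \<and> A x y \<and> A y v)"
proof (induction t)
  case (Suc t)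
  let ?M = "midpoints V A u v"
  obtain ds where ds: "length ds = t" "distinct (map fst ds @ map snd ds)"
      "set (map fst ds @ map snd ds) \<inter> ?M = {}" "\<forall>(x, y)\<in>set ds. A u x \<and> A x y \<and> A y v"
    using Suc by (cases t) auto
  let ?X = "?M \<union> set (map fst ds @ map snd ds)"
  have "card ?X \<le> card ?M + card (set (map fst ds @ map snd ds))" by (rule card_Un_le)
  also have "\<dots> \<le> card ?M + 2 * t"
    using card_length[of "map fst ds @ map snd ds"] ds(1) by simp
  finally have "card ?X \<le> card ?M + 2 * t" .
  then have "card ?X < 2 * k" using Suc.prems(2) by simp
  moreover have "?X \<subseteq> V"
    using ds(4) tournament_arc_vertices[OF T] unfolding midpoints_def by fastforce
  ultimately have "strongly_connected (V - ?X) A" using S unfolding m_strong_def by blast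
  moreover have "u \<noteq> v" using assms(5) tournament_irrefl[OF T] by blast
  then have "u \<notin> ?X" "v \<notin> ?X"
    using midpoint_path(2,3)[OF T] detours_avoid_ends[OF T _ ds(4)] by blast+
  ultimately obtain x y where xy: "x \<in> V - ?X" "y \<in> V - ?X" "A u x" "A x y" "A y v"
    using strong_detour_exists[OF T _ _ _ _ assms(5)] assms(3,4) by blast
  then have "x \<noteq> y" using tournament_irrefl[OF T] by blast
  then show ?case using ds xy by (intro exI[of _ "(x, y) # ds"]) auto
qed simp

lemma midpoints_and_detours_exist:
  assumes "k \<ge> 1" and T: "tournament V A" and S: "m_strong (2 * k) V A"
    and "u \<in> V" "v \<in> V" "A u v" "midpoints V A u v \<noteq> {}"
  obtains zs ds where "distinct zs" "set zs \<subseteq> midpoints V A u v" "1 \<le> length zs"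
    "length zs + length ds = k" "distinct (map fst ds @ map snd ds)"
    "set (map fst ds @ map snd ds) \<inter> midpoints V A u v = {}"
    "\<forall>(x, y)\<in>set ds. A u x \<and> A x y \<and> A y v"
proof -
  let ?M = "midpoints V A u v"
  define m where "m = min (card ?M) k"
  have "finite ?M" using tournament_finite[OF T] unfolding midpoints_def by simp
  then have "1 \<le> m" "m \<le> k" "m \<le> card ?M" using assms(1,7) unfolding m_def by (auto simp: Suc_le_eq)
  obtain D where D: "D \<subseteq> ?M" "card D = m" "finite D"
    using obtain_subset_with_card_n[OF \<open>m \<le> card ?M\<close>] by blast
  obtain zs where zs: "distinct zs" "set zs = D" using finite_distinct_list[OF D(3)] by blast
  have "length zs = m" using distinct_card[OF zs(1)] zs(2) D(2) by simp
  have "\<exists>ds. length ds = k - m \<and> distinct (map fst ds @ map snd ds)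
      \<and> set (map fst ds @ map snd ds) \<inter> ?M = {} \<and> (\<forall>(x, y)\<in>set ds. A u x \<and> A x y \<and> A y v)"
  proof (cases "k - m = 0")
    case True
    then show ?thesis by (intro exI[of _ "[]"]) simp
  next
    case False
    then have "card ?M + 2 * (k - m) \<le> 2 * k" unfolding m_def by simp
    with False show ?thesis using detours_exist[OF T S assms(4-6)] by blast
  qed
  then obtain ds where "length ds = k - m" "distinct (map fst ds @ map snd ds)"
    "set (map fst ds @ map snd ds) \<inter> ?M = {}" "\<forall>(x, y)\<in>set ds. A u x \<and> A x y \<and> A y v"
    by blast
  with zs D(1) \<open>length zs = m\<close> \<open>1 \<le> m\<close> \<open>m \<le> k\<close> show ?thesis
    by (intro that[of zs ds]) auto
qed

lemma weak_container_of_arc: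
  assumes "k \<ge> 1" and T: "tournament V A" and S: "m_strong (2 * k) V A"
    and "u \<in> V" "v \<in> V" "A u v" "midpoints V A u v \<noteq> {}"
  shows "weak_container V A (k + 2) u v"
proof -
  obtain zs ds where zs: "distinct zs" "set zs \<subseteq> midpoints V A u v" "1 \<le> length zs"
      and count: "length zs + length ds = k"
      and ds: "distinct (map fst ds @ map snd ds)" "set (map fst ds @ map snd ds) \<inter> midpoints V A u v = {}"
        "\<forall>(x, y)\<in>set ds. A u x \<and> A x y \<and> A y v"
    using midpoints_and_detours_exist[OF assms] by blast
  let ?L = "map fst ds @ map snd ds"
  define I where "I = set zs \<union> set ?L"
  have "card I \<le> card (set zs) + card (set ?L)" unfolding I_def by (rule card_Un_le)
  also have "\<dots> \<le> length zs + 2 * length ds" using card_length[of ?L] card_length[of zs] by simp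
  finally have "card I < 2 * k" using zs(3) count by linarith
  moreover have "I \<subseteq> V"
    using zs(2) ds(3) tournament_arc_vertices[OF T] unfolding I_def midpoints_def by fastforce
  ultimately have SI: "strongly_connected (V - I) A" using S unfolding m_strong_def by blast
  have "u \<noteq> v" using assms(6) tournament_irrefl[OF T] by blast
  have "u \<notin> I" "v \<notin> I"
    using zs(2) midpoint_path(2,3)[OF T] detours_avoid_ends[OF T \<open>u \<noteq> v\<close> ds(3)]
    unfolding I_def by blast+
  then have uv: "u \<in> V - I" "v \<in> V - I" using assms(4,5) by blast+
  obtain p q where "cycle_through (V - I) A u v p q" "set p \<union> set q = V - I"
    using strong_subtournament_spanning_cycle[OF T _ SI uv \<open>u \<noteq> v\<close>] by blast
  then have cycle: "weak_container (V - I) A 2 u v"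
    using weak_container_cycle_through \<open>u \<noteq> v\<close> by metis
  have "set ?L \<inter> (V - I) = {}" unfolding I_def by blast
  from weak_container_add_detours[OF T cycle uv \<open>u \<noteq> v\<close> ds(1,3) this]
  have detours: "weak_container (V - I \<union> set ?L) A (2 + length ds) u v" .
  have "set zs \<inter> (V - I \<union> set ?L) = {}" using ds(2) zs(2) unfolding I_def by blast
  from weak_container_add_midpoints[OF T detours _ _ zs(1,2) this] uv
  have "weak_container (V - I \<union> set ?L \<union> set zs) A (2 + length ds + length zs) u v" by simp
  moreover have "V - I \<union> set ?L \<union> set zs = V" using \<open>I \<subseteq> V\<close> unfolding I_def by blast
  ultimately show ?thesis using count by (simp add: add.commute)
qed

theorem proposition2p8:
  fixes V :: "'a set" and A :: "'a \<Rightarrow> 'a \<Rightarrow> bool" and k :: nat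
  assumes "k \<ge> 1"
    and "tournament V A"
    and "m_strong (2 * k) V A"
    and "\<forall>x\<in>V. \<forall>y\<in>V. x \<noteq> y \<longrightarrow>
           (\<exists>z\<in>V. (A x z \<and> A z y) \<or> (A y z \<and> A z x))"
  shows "k_star_weakly_connected (k + 2) V A"
  unfolding k_star_weakly_connected_def
proof (intro ballI impI)
  fix u v assume uv: "u \<in> V" "v \<in> V" "u \<noteq> v"
  have midpoints: "midpoints V A u v \<noteq> {}" "midpoints V A v u \<noteq> {}"
    using assms(4) uv unfolding midpoints_def by blast+
  from tournament_total[OF assms(2) uv] show "weak_container V A (k + 2) u v"
  proof
    assume "A u v"
    then show ?thesis using weak_container_of_arc[OF assms(1-3) uv(1,2) _ midpoints(1)] by blast
  next
    assume "A v u"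
    then have "weak_container V A (k + 2) v u"
      using weak_container_of_arc[OF assms(1-3) uv(2,1) _ midpoints(2)] by blast
    then show ?thesis by (rule weak_container_swap)
  qed
qed

end
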